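(* Assume CH. Let $\mathcal{I}$ and $\mathcal{J}$ be ideals such that $\mathcal{I}\subseteq\mathcal{I}'$ for some hereditary weak P-ideal $\mathcal{I}'$ with $\mathcal{J}\not\leq_K\mathcal{I}'$. Then there is a Mr\'owka space in $\mathrm{FinBW}(\mathcal{I})\setminus\mathrm{FinBW}(\mathcal{J})$.
   Context: An ideal on an infinite countable set $X$ is a family $\mathcal{I}\subseteq\mathcal{P}(X)$ closed under subsets and finite unions, containing all finite subsets, with $X\notin\mathcal{I}$. $\mathcal{I}|A=\{B\cap A:B\in\mathcal{I}\}$. A space $X$ is in $\mathrm{FinBW}(\mathcal{I})$ if $X$ is Hausdorff and for every sequence $(x_n)_{n\in\bigcup\mathcal{I}}$ in $X$ there is $A\notin\mathcal{I}$ with $(x_n)_{n\in A}$ convergent in $X$. $\mathcal{J}\leq_K\mathcal{I}$: there is a function $f:\bigcup\mathcal{I}\to\bigcup\mathcal{J}$ with $f^{-1}[B]\in\mathcal{I}$ for all $B\in\mathcal{J}$. $\mathrm{Fin}^2$: ideal on $\omega^2$ of all $A$ with only finitely many $n$ such that $\{m:(n,m)\in A\}$ is infinite. $\mathcal{I}\sqsubseteq\mathcal{J}$: there is a bijection $f:\bigcup\mathcal{J}\to\bigcup\mathcal{I}$ with $f^{-1}[A]\in\mathcal{J}$ for all $A\in\mathcal{I}$. $\mathcal{I}$ is a hereditary weak P-ideal if $\mathrm{Fin}^2\not\sqsubseteq\mathcal{I}|A$ for every $A\notin\mathcal{I}$. A Mr\'owka space is $\Phi(\mathcal{A})$ for an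 infinite almost disjoint family $\mathcal{A}$ of infinite subsets of $\omega$: underlying set $\omega\cup\mathcal{A}\cup\{\infty\}$, points of $\omega$ isolated, basic neighbourhoods of $A\in\mathcal{A}$ are $\{A\}\cup(A\setminus F)$ ($F\subseteq\omega$ finite), of $\infty$ are $\{\infty\}\cup(\mathcal{A}\setminus G)\cup(\omega\setminus(F\cup\bigcup G))$ ($F\subseteq\omega$, $G\subseteq\mathcal{A}$ finite). *)

theory Defs
  imports "HOL-Analysis.Analysis" "HOL-Library.Equipollence"
begin

definition CH :: bool where
  "CH \<longleftrightarrow> (\<forall>S :: nat set set. countable S \<or> S \<approx> (UNIV :: nat set set))"

definition is_ideal :: "'a set \<Rightarrow> 'a set set \<Rightarrow> bool" where
  "is_ideal X I \<longleftrightarrow> countable X \<and> infinite X \<and> I \<subseteq> Pow X \<and>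
     (\<forall>A B. A \<in> I \<and> B \<subseteq> A \<longrightarrow> B \<in> I) \<and>
     (\<forall>A B. A \<in> I \<and> B \<in> I \<longrightarrow> A \<union> B \<in> I) \<and>
     (\<forall>F. F \<subseteq> X \<and> finite F \<longrightarrow> F \<in> I) \<and>
     X \<notin> I"

definition ideal_restr :: "'a set set \<Rightarrow> 'a set \<Rightarrow> 'a set set" where
  "ideal_restr I A = {B \<inter> A | B. B \<in> I}"

definition Fin2 :: "(nat \<times> nat) set set" where
  "Fin2 = {A. finite {n. infinite {m. (n, m) \<in> A}}}"

definition katetov_le :: "'b set set \<Rightarrow> 'a set set \<Rightarrow> bool" where
  "katetov_le J I \<longleftrightarrow> (\<exists>f. (\<forall>x\<in>\<Union>I. f x \<in> \<Union>J) \<and> (\<forall>B\<in>J. {x \<in> \<Union>I. f x \<in> B} \<in> I))"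

definition ideal_sqsub :: "'a set set \<Rightarrow> 'b set set \<Rightarrow> bool" where
  "ideal_sqsub I J \<longleftrightarrow> (\<exists>f. bij_betw f (\<Union>J) (\<Union>I) \<and> (\<forall>A\<in>I. {x \<in> \<Union>J. f x \<in> A} \<in> J))"

definition hereditary_weak_P :: "'a set \<Rightarrow> 'a set set \<Rightarrow> bool" where
  "hereditary_weak_P X I \<longleftrightarrow> (\<forall>A. A \<subseteq> X \<and> A \<notin> I \<longrightarrow> \<not> ideal_sqsub Fin2 (ideal_restr I A))"

definition FinBW :: "'a set \<Rightarrow> 'a set set \<Rightarrow> 'p topology \<Rightarrow> bool" where
  "FinBW X I T \<longleftrightarrow> Hausdorff_space T \<and>
     (\<forall>x. (\<forall>n\<in>X. x n \<in> topspace T) \<longrightarrow>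
        (\<exists>A. A \<subseteq> X \<and> A \<notin> I \<and> (\<exists>L. limitin T x L (inf cofinite (principal A)))))"

definition almost_disjoint_family :: "nat set set \<Rightarrow> bool" where
  "almost_disjoint_family \<A> \<longleftrightarrow> infinite \<A> \<and> (\<forall>A\<in>\<A>. infinite A) \<and>
     (\<forall>A\<in>\<A>. \<forall>B\<in>\<A>. A \<noteq> B \<longrightarrow> finite (A \<inter> B))"

datatype mpt = Pt nat | Ast "nat set" | Infty

definition mrowka_basis :: "nat set set \<Rightarrow> mpt set set" where
  "mrowka_basis \<A> =
     {{Pt n} | n. True} \<union>
     {{Ast A} \<union> Pt ` (A - F) | A F. A \<in> \<A> \<and> finite F} \<union>
     {{Infty} \<union> Ast ` (\<A> - G) \<union> Pt ` (UNIV - (F \<union> \<Union>G)) | F G.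
        finite F \<and> finite G \<and> G \<subseteq> \<A>}"

definition mrowka :: "nat set set \<Rightarrow> mpt topology" where
  "mrowka \<A> = topology_generated_by (mrowka_basis \<A>)"

end

theory Submission
  imports Defs
begin

text \<open>
  Transport \<open>J\<close> along a bijection \<open>Y \<rightarrow> \<omega>\<close> to an ideal \<open>K\<close> on \<open>\<omega>\<close>, so that \<open>K \<not>\<le>\<^sub>K I'\<close>.
  Under CH the functions \<open>z : X \<rightarrow> \<omega>\<close> can be enumerated in type \<open>\<omega>\<^sub>1\<close>, and a transfinite
  recursion builds an almost disjoint family \<open>\<A> \<subseteq> K\<close> that catches every \<open>z\<close>: either \<open>z\<close> is
  constant on an \<open>I'\<close>-positive set, or on some \<open>I'\<close>-positive set its fibres are finite and its
  values lie almost inside one member of \<open>\<A>\<close>. When only countably many members have been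
  chosen, \<open>K \<not>\<le>\<^sub>K I'\<close> gives \<open>D \<in> K\<close> whose preimage under \<open>z\<close> is \<open>I'\<close>-positive, and the hereditary
  weak P-property (no copy of \<open>Fin\<^sup>2\<close> in a restriction of \<open>I'\<close>) shrinks this preimage to a
  positive set on which \<open>z\<close> has finite fibres and meets every earlier member finitely; its
  image is the new member. After extending \<open>\<A>\<close> maximally inside \<open>K\<close>, every \<open>K\<close>-positive set
  meets a member of \<open>\<A>\<close> in an infinite set. Now every sequence in \<open>\<Phi>(\<A>)\<close> converges along an
  \<open>I'\<close>-positive, hence \<open>I\<close>-positive, set, whereas the points of \<open>\<omega>\<close>, indexed by \<open>Y\<close>, converge
  along no \<open>J\<close>-positive set: a limit \<open>A \<in> \<A> \<subseteq> K\<close> would make that set \<open>J\<close>-small, and the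
  limit \<open>\<infinity>\<close> is excluded by maximality.
\<close>

lemma ideal_subset: "is_ideal X I \<Longrightarrow> A \<in> I \<Longrightarrow> B \<subseteq> A \<Longrightarrow> B \<in> I"
  unfolding is_ideal_def by blast

lemma ideal_Un: "is_ideal X I \<Longrightarrow> A \<in> I \<Longrightarrow> B \<in> I \<Longrightarrow> A \<union> B \<in> I"
  unfolding is_ideal_def by blast

lemma ideal_finite: "is_ideal X I \<Longrightarrow> F \<subseteq> X \<Longrightarrow> finite F \<Longrightarrow> F \<in> I"
  unfolding is_ideal_def by blast

lemma ideal_carrier_notin: "is_ideal X I \<Longrightarrow> X \<notin> I"
  unfolding is_ideal_def by blast

lemma ideal_subset_carrier: "is_ideal X I \<Longrightarrow> A \<in> I \<Longrightarrow> A \<subseteq> X"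
  unfolding is_ideal_def by auto

lemma ideal_countable: "is_ideal X I \<Longrightarrow> countable X"
  unfolding is_ideal_def by blast

lemma ideal_infinite: "is_ideal X I \<Longrightarrow> infinite X"
  unfolding is_ideal_def by blast

lemma ideal_empty: "is_ideal X I \<Longrightarrow> {} \<in> I"
  using ideal_finite[of X I "{}"] by simp

lemma ideal_Union: "is_ideal X I \<Longrightarrow> \<Union>I = X"
proof -
  assume I: "is_ideal X I"
  have "{x} \<in> I" if "x \<in> X" for x
    using ideal_finite[OF I, of "{x}"] that by simp
  then show ?thesis using ideal_subset_carrier[OF I] by blast
qed

lemma ideal_UN:
  assumes "is_ideal X I" "finite K" "\<And>k. k \<in> K \<Longrightarrow> f k \<in> I"
  shows "(\<Union>k\<in>K. f k) \<in> I"
  using assms(2,3)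
proof (induction K rule: finite_induct)
  case empty
  show ?case using ideal_empty[OF assms(1)] by simp
next
  case (insert k K)
  then show ?case using ideal_Un[OF assms(1)] by simp
qed

lemma ideal_positive_infinite: "is_ideal X I \<Longrightarrow> A \<subseteq> X \<Longrightarrow> A \<notin> I \<Longrightarrow> infinite A"
  using ideal_finite[of X I A] by blast

lemma ideal_positive_Diff: "is_ideal X I \<Longrightarrow> A \<notin> I \<Longrightarrow> B \<in> I \<Longrightarrow> A - B \<notin> I"
proof
  assume I: "is_ideal X I" and "A \<notin> I" "B \<in> I" "A - B \<in> I"
  then have "(A - B) \<union> B \<in> I" using ideal_Un by blast
  then show False using ideal_subset[OF I _, of "(A - B) \<union> B" A] \<open>A \<notin> I\<close> by blast
qed

lemma finite_preimage_if_finite_fibres: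
  assumes "\<And>i. finite {n\<in>C. z n = i}" and "finite S"
  shows "finite {n\<in>C. z n \<in> S}"
proof -
  have "{n\<in>C. z n \<in> S} = (\<Union>i\<in>S. {n\<in>C. z n = i})" by blast
  then show ?thesis using assms by simp
qed

section \<open>Hereditary weak P-ideals\<close>

lemma grid_bijection:
  assumes "countable A" and "infinite (k ` A)" and "\<And>n. n \<in> A \<Longrightarrow> infinite {m\<in>A. k m = k n}"
  obtains \<phi> :: "'a \<Rightarrow> nat \<times> nat"
  where "bij_betw \<phi> A UNIV" and "\<forall>n\<in>A. \<forall>m\<in>A. fst (\<phi> n) = fst (\<phi> m) \<longleftrightarrow> k n = k m"
proof
  define fibre where "fibre i = {n\<in>A. k n = i}" for i
  define \<phi> where "\<phi> n = (to_nat_on (k ` A) (k n), to_nat_on (fibre (k n)) n)" for n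
  have countable_fibre: "countable (fibre i)" for i
    unfolding fibre_def using \<open>countable A\<close> by (rule countable_subset[rotated]) auto
  have countable_image: "countable (k ` A)"
    using \<open>countable A\<close> by simp
  have same_row: "fst (\<phi> n) = fst (\<phi> m) \<longleftrightarrow> k n = k m" if "n \<in> A" "m \<in> A" for n m
    using inj_on_to_nat_on[OF countable_image] that by (auto simp: \<phi>_def dest: inj_onD)
  then show "\<forall>n\<in>A. \<forall>m\<in>A. fst (\<phi> n) = fst (\<phi> m) \<longleftrightarrow> k n = k m" by blast
  show "bij_betw \<phi> A UNIV"
  proof (rule bij_betw_imageI)
    show "inj_on \<phi> A"
    proof
      fix n m assume "n \<in> A" "m \<in> A" "\<phi> n = \<phi> m"
      then have "k n = k m"
        using same_row by metis
      then have "n \<in> fibre (k n)" "m \<in> fibre (k n)"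
        using \<open>n \<in> A\<close> \<open>m \<in> A\<close> by (auto simp: fibre_def)
      moreover have "to_nat_on (fibre (k n)) n = to_nat_on (fibre (k n)) m"
        using \<open>\<phi> n = \<phi> m\<close> \<open>k n = k m\<close> by (simp add: \<phi>_def)
      ultimately show "n = m"
        by (metis countable_fibre inj_on_to_nat_on inj_onD)
    qed
    show "\<phi> ` A = UNIV"
    proof safe
      fix p q
      obtain i where i: "i \<in> k ` A" "to_nat_on (k ` A) i = p"
        using to_nat_on_surj[OF countable_image assms(2)] by blast
      from i(1) obtain n\<^sub>0 where "n\<^sub>0 \<in> A" "k n\<^sub>0 = i" by blast
      then have "infinite (fibre i)"
        using assms(3)[of n\<^sub>0] unfolding fibre_def by simp
      then obtain n where n: "n \<in> fibre i" "to_nat_on (fibre i) n = q"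
        using to_nat_on_surj[OF countable_fibre] by blast
      then have "\<phi> n = (p, q)" and "n \<in> A"
        using i by (auto simp: \<phi>_def fibre_def)
      then show "(p, q) \<in> \<phi> ` A" by force
    qed simp
  qed
qed

lemma Fin2_preimage_in_ideal:
  assumes I: "is_ideal X I" and \<phi>: "bij_betw \<phi> A (UNIV :: (nat \<times> nat) set)"
    and rows: "\<And>p. {n\<in>A. fst (\<phi> n) = p} \<in> I"
    and thin: "\<And>C. C \<subseteq> A \<Longrightarrow> (\<And>p. finite {n\<in>C. fst (\<phi> n) = p}) \<Longrightarrow> C \<in> I"
    and "F \<in> Fin2"
  shows "{n\<in>A. \<phi> n \<in> F} \<in> I"
proof -
  define K where "K = {p. infinite {q. (p, q) \<in> F}}"
  define C where "C = {n\<in>A. \<phi> n \<in> F \<and> fst (\<phi> n) \<notin> K}"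
  have "(\<Union>p\<in>K. {n\<in>A. fst (\<phi> n) = p}) \<in> I"
    by (rule ideal_UN[OF I]) (use \<open>F \<in> Fin2\<close> rows in \<open>simp_all add: Fin2_def K_def\<close>)
  moreover have "C \<in> I"
  proof (rule thin)
    fix p
    show "finite {n\<in>C. fst (\<phi> n) = p}"
    proof (cases "p \<in> K")
      case True
      then have "{n\<in>C. fst (\<phi> n) = p} = {}" by (auto simp: C_def)
      then show ?thesis by (metis finite.emptyI)
    next
      case False
      have "\<phi> ` {n\<in>C. fst (\<phi> n) = p} \<subseteq> {p} \<times> {q. (p, q) \<in> F}"
      proof (rule image_subsetI)
        fix n assume "n \<in> {n\<in>C. fst (\<phi> n) = p}"
        then have "\<phi> n \<in> F" "fst (\<phi> n) = p" by (auto simp: C_def)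
        then show "\<phi> n \<in> {p} \<times> {q. (p, q) \<in> F}" by (cases "\<phi> n") auto
      qed
      moreover have "finite {q. (p, q) \<in> F}"
        using False by (simp add: K_def)
      ultimately have "finite (\<phi> ` {n\<in>C. fst (\<phi> n) = p})"
        by (meson finite.emptyI finite_SigmaI finite_insert finite_subset)
      moreover have "inj_on \<phi> {n\<in>C. fst (\<phi> n) = p}"
        using \<phi> by (rule inj_on_subset[OF bij_betw_imp_inj_on]) (auto simp: C_def)
      ultimately show ?thesis
        by (rule finite_imageD)
    qed
  qed (auto simp: C_def)
  moreover have "{n\<in>A. \<phi> n \<in> F} \<subseteq> (\<Union>p\<in>K. {n\<in>A. fst (\<phi> n) = p}) \<union> C"
    by (auto simp: C_def)
  ultimately show ?thesis
    by (meson I ideal_Un ideal_subset)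
qed

lemma Fin2_sqsub_ideal_restr:
  assumes I: "is_ideal X I" and "A \<subseteq> X" and \<phi>: "bij_betw \<phi> A (UNIV :: (nat \<times> nat) set)"
    and rows: "\<And>p. {n\<in>A. fst (\<phi> n) = p} \<in> I"
    and thin: "\<And>C. C \<subseteq> A \<Longrightarrow> (\<And>p. finite {n\<in>C. fst (\<phi> n) = p}) \<Longrightarrow> C \<in> I"
  shows "ideal_sqsub Fin2 (ideal_restr I A)"
proof -
  have restr_carrier: "\<Union>(ideal_restr I A) = A"
    using \<open>A \<subseteq> X\<close> ideal_finite[OF I, of "{n}" for n] by (auto simp: ideal_restr_def)
  have "{x} \<in> Fin2" for x :: "nat \<times> nat"
  proof -
    have "finite {m. (n, m) = x}" for n
      by (rule finite_subset[of _ "{snd x}"]) auto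
    then show ?thesis by (simp add: Fin2_def)
  qed
  then have Fin2_carrier: "\<Union>Fin2 = UNIV" by blast
  show ?thesis
    unfolding ideal_sqsub_def restr_carrier Fin2_carrier
  proof (intro exI[of _ \<phi>] conjI ballI)
    fix F assume "F \<in> Fin2"
    then have "{n\<in>A. \<phi> n \<in> F} \<inter> A \<in> ideal_restr I A"
      using Fin2_preimage_in_ideal[OF I \<phi> rows thin] unfolding ideal_restr_def by blast
    then show "{n\<in>A. \<phi> n \<in> F} \<in> ideal_restr I A"
      by (simp add: Int_absorb2)
  qed (rule \<phi>)
qed

lemma fibre_cases:
  assumes same: "\<forall>n\<in>A. \<forall>m\<in>A. r n = r m \<longleftrightarrow> k n = k m" and "C \<subseteq> A"
  obtains "{n\<in>C. r n = p} = {}" | m where "m \<in> C" "{n\<in>C. r n = p} = {n\<in>C. k n = k m}"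
proof (cases "\<exists>m\<in>C. r m = p")
  case True
  then obtain m where "m \<in> C" "r m = p" by blast
  moreover have "r n = p \<longleftrightarrow> k n = k m" if "n \<in> C" for n
    using same[rule_format, of n m] \<open>C \<subseteq> A\<close> that \<open>m \<in> C\<close> \<open>r m = p\<close> by auto
  then have "{n\<in>C. r n = p} = {n\<in>C. k n = k m}" by auto
  with \<open>m \<in> C\<close> show ?thesis by (rule that(2))
next
  case False
  then have "{n\<in>C. r n = p} = {}" by blast
  then show ?thesis by (rule that(1))
qed

lemma Fin2_sqsub_ideal_restr_fibres:
  assumes I: "is_ideal X I" and "A \<subseteq> X" "A \<notin> I"
    and infinite_fibres: "\<And>n. n \<in> A \<Longrightarrow> infinite {m\<in>A. k m = k n}"
    and fibres: "\<And>i. {n\<in>A. k n = i} \<in> I"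
    and thin: "\<And>C. C \<subseteq> A \<Longrightarrow> (\<And>i. finite {n\<in>C. k n = i}) \<Longrightarrow> C \<in> I"
  shows "ideal_sqsub Fin2 (ideal_restr I A)"
proof -
  have "countable A"
    using countable_subset[OF \<open>A \<subseteq> X\<close> ideal_countable[OF I]] .
  moreover have "infinite (k ` A)"
  proof
    assume "finite (k ` A)"
    then have "(\<Union>i\<in>k ` A. {n\<in>A. k n = i}) \<in> I"
      using fibres by (rule ideal_UN[OF I])
    moreover have "(\<Union>i\<in>k ` A. {n\<in>A. k n = i}) = A" by blast
    ultimately show False using \<open>A \<notin> I\<close> by simp
  qed
  ultimately obtain \<phi> :: "'a \<Rightarrow> nat \<times> nat" where \<phi>: "bij_betw \<phi> A UNIV"
    and rows_fibres: "\<forall>n\<in>A. \<forall>m\<in>A. fst (\<phi> n) = fst (\<phi> m) \<longleftrightarrow> k n = k m"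
    using infinite_fibres by (rule grid_bijection)
  have fibres_rows: "\<forall>n\<in>A. \<forall>m\<in>A. k n = k m \<longleftrightarrow> fst (\<phi> n) = fst (\<phi> m)"
    using rows_fibres by simp
  show ?thesis
  proof (rule Fin2_sqsub_ideal_restr[OF I \<open>A \<subseteq> X\<close> \<phi>])
    fix p
    show "{n\<in>A. fst (\<phi> n) = p} \<in> I"
    proof (rule fibre_cases[OF rows_fibres order_refl, of p])
      assume "{n\<in>A. fst (\<phi> n) = p} = {}"
      then show ?thesis by (simp only: ideal_empty[OF I])
    qed (simp add: fibres)
  next
    fix C assume "C \<subseteq> A" and finite_rows: "\<And>p. finite {n\<in>C. fst (\<phi> n) = p}"
    show "C \<in> I"
    proof (rule thin[OF \<open>C \<subseteq> A\<close>])
      show "finite {n\<in>C. k n = i}" for i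
      proof (rule fibre_cases[OF fibres_rows \<open>C \<subseteq> A\<close>, of i])
        assume "{n\<in>C. k n = i} = {}"
        then show ?thesis by (metis finite.emptyI)
      qed (simp add: finite_rows)
    qed
  qed
qed

text \<open>This is where the hereditary weak P-property is used: if it failed, the restriction of \<open>I\<close>
  to the points with infinite fibre would contain a copy of \<open>Fin\<^sup>2\<close>.\<close>
lemma hereditary_weak_P_finite_fibres:
  assumes I: "is_ideal X I" and hw: "hereditary_weak_P X I" and "A \<subseteq> X" "A \<notin> I"
    and fibres: "\<And>i. {n\<in>A. k n = i} \<in> I"
  shows "\<exists>C\<subseteq>A. C \<notin> I \<and> (\<forall>i. finite {n\<in>C. k n = i})"
proof (rule ccontr)
  assume "\<not> ?thesis"
  then have thin: "C \<in> I" if "C \<subseteq> A" "\<And>i. finite {n\<in>C. k n = i}" for C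
    using that by blast
  define A' where "A' = {n\<in>A. infinite {m\<in>A. k m = k n}}"
  have fibre_A': "{m\<in>A'. k m = k n} = {m\<in>A. k m = k n}" if "n \<in> A'" for n
    using that by (auto simp: A'_def)
  have "A - A' \<in> I"
  proof (rule thin)
    fix i
    show "finite {n\<in>A - A'. k n = i}"
    proof (cases "\<exists>n\<in>A - A'. k n = i")
      case True
      then obtain n where "n \<in> A - A'" "k n = i" by blast
      then have "finite {m\<in>A. k m = k n}" by (simp add: A'_def)
      then show ?thesis by (rule finite_subset[rotated]) (use \<open>k n = i\<close> in auto)
    next
      case False
      then have "{n\<in>A - A'. k n = i} = {}" by blast
      then show ?thesis by (metis finite.emptyI)
    qed
  qed blast
  moreover have "A - (A - A') = A'" by (auto simp: A'_def)
  ultimately have "A' \<notin> I"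
    using ideal_positive_Diff[OF I \<open>A \<notin> I\<close>] by metis
  have "A' \<subseteq> X" using \<open>A \<subseteq> X\<close> by (auto simp: A'_def)
  have "ideal_sqsub Fin2 (ideal_restr I A')"
  proof (rule Fin2_sqsub_ideal_restr_fibres[OF I \<open>A' \<subseteq> X\<close> \<open>A' \<notin> I\<close>])
    show "infinite {m\<in>A'. k m = k n}" if "n \<in> A'" for n
      using that fibre_A'[OF that] by (simp add: A'_def)
    show "{n\<in>A'. k n = i} \<in> I" for i
      by (rule ideal_subset[OF I fibres[of i]]) (auto simp: A'_def)
    show "C \<in> I" if "C \<subseteq> A'" "\<And>i. finite {n\<in>C. k n = i}" for C
      by (rule thin) (use that in \<open>auto simp: A'_def\<close>)
  qed
  then show False
    using hw \<open>A' \<notin> I\<close> \<open>A' \<subseteq> X\<close> unfolding hereditary_weak_P_def by blast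
qed

lemma hereditary_weak_P_diagonal:
  assumes I: "is_ideal X I" and hw: "hereditary_weak_P X I" and "A \<subseteq> X" "A \<notin> I"
    and "countable \<B>" "\<B> \<subseteq> I"
  shows "\<exists>C\<subseteq>A. C \<notin> I \<and> (\<forall>B\<in>\<B>. finite (B \<inter> C))"
proof (cases "\<B> = {} \<or> A - \<Union>\<B> \<notin> I")
  case True
  then have "A - \<Union>\<B> \<notin> I" using \<open>A \<notin> I\<close> by auto
  moreover have "finite (B \<inter> (A - \<Union>\<B>))" if "B \<in> \<B>" for B
  proof -
    have "B \<inter> (A - \<Union>\<B>) = {}" using that by blast
    then show ?thesis by (metis finite.emptyI)
  qed
  ultimately show ?thesis by (intro exI[of _ "A - \<Union>\<B>"]) blast
next
  case False
  then have "\<B> \<noteq> {}" and "A - \<Union>\<B> \<in> I" by auto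
  define b where "b = from_nat_into \<B>"
  have range_b: "range b = \<B>"
    using \<open>\<B> \<noteq> {}\<close> \<open>countable \<B>\<close> by (simp add: b_def)
  \<comment> \<open>For \<open>n \<notin> \<Union>\<B>\<close> the value \<open>k n\<close> is arbitrary; such points form the small set \<open>A - \<Union>\<B>\<close>.\<close>
  define k where "k n = (LEAST i. n \<in> b i)" for n
  have "{n\<in>A. k n = i} \<subseteq> b i \<union> (A - \<Union>\<B>)" for i
  proof
    fix n assume n: "n \<in> {n\<in>A. k n = i}"
    show "n \<in> b i \<union> (A - \<Union>\<B>)"
    proof (cases "n \<in> \<Union>\<B>")
      case True
      then have "\<exists>j. n \<in> b j" using range_b by blast
      then have "n \<in> b (k n)" unfolding k_def by (rule LeastI_ex)
      then show ?thesis using n by simp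
    qed (use n in blast)
  qed
  moreover have "b i \<union> (A - \<Union>\<B>) \<in> I" for i
    using range_b \<open>\<B> \<subseteq> I\<close> ideal_Un[OF I _ \<open>A - \<Union>\<B> \<in> I\<close>] by blast
  ultimately have "{n\<in>A. k n = i} \<in> I" for i
    by (rule ideal_subset[OF I, rotated])
  then obtain C where "C \<subseteq> A" "C \<notin> I" and finite_fibres: "\<forall>i. finite {n\<in>C. k n = i}"
    using hereditary_weak_P_finite_fibres[OF I hw \<open>A \<subseteq> X\<close> \<open>A \<notin> I\<close>] by blast
  have "finite (B \<inter> C)" if "B \<in> \<B>" for B
  proof -
    obtain i where "B = b i" using range_b \<open>B \<in> \<B>\<close> by blast
    then have "B \<inter> C \<subseteq> {n\<in>C. k n \<in> {..i}}"
      by (auto simp: k_def intro: Least_le)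
    moreover have "finite {n\<in>C. k n \<in> {..i}}"
      using finite_fibres by (intro finite_preimage_if_finite_fibres) auto
    ultimately show ?thesis by (rule finite_subset)
  qed
  with \<open>C \<subseteq> A\<close> \<open>C \<notin> I\<close> show ?thesis by blast
qed

lemma hereditary_weak_P_image_almost_disjoint:
  assumes I: "is_ideal X I" and hw: "hereditary_weak_P X I" and "C\<^sub>0 \<subseteq> X" "C\<^sub>0 \<notin> I"
    and finite_fibres\<^sub>0: "\<forall>i. finite {x\<in>C\<^sub>0. z x = i}" and "countable \<A>"
    and small: "\<forall>B\<in>\<A>. {x\<in>C\<^sub>0. z x \<in> B} \<in> I"
  shows "\<exists>C\<subseteq>C\<^sub>0. C \<notin> I \<and> infinite (z ` C) \<and> (\<forall>B\<in>\<A>. finite (z ` C \<inter> B))"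
proof -
  define \<B> where "\<B> = (\<lambda>B. {x\<in>C\<^sub>0. z x \<in> B}) ` \<A>"
  have "countable \<B>" using \<open>countable \<A>\<close> by (simp add: \<B>_def)
  moreover have "\<B> \<subseteq> I" using small by (auto simp: \<B>_def)
  ultimately obtain C where "C \<subseteq> C\<^sub>0" "C \<notin> I" and thin: "\<forall>B\<in>\<B>. finite (B \<inter> C)"
    using hereditary_weak_P_diagonal[OF I hw \<open>C\<^sub>0 \<subseteq> X\<close> \<open>C\<^sub>0 \<notin> I\<close>] by blast
  have "infinite (z ` C)"
  proof
    assume "finite (z ` C)"
    moreover have "finite {x\<in>C. z x = i}" for i
      by (rule finite_subset[OF _ finite_fibres\<^sub>0[rule_format, of i]]) (use \<open>C \<subseteq> C\<^sub>0\<close> in blast)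
    ultimately have "finite {x\<in>C. z x \<in> z ` C}"
      by (intro finite_preimage_if_finite_fibres)
    moreover have "{x\<in>C. z x \<in> z ` C} = C" by blast
    moreover have "infinite C"
      using ideal_positive_infinite[OF I _ \<open>C \<notin> I\<close>] \<open>C \<subseteq> C\<^sub>0\<close> \<open>C\<^sub>0 \<subseteq> X\<close> by blast
    ultimately show False by simp
  qed
  moreover have "finite (z ` C \<inter> B)" if "B \<in> \<A>" for B
  proof -
    have "finite ({x\<in>C\<^sub>0. z x \<in> B} \<inter> C)" using thin that by (simp add: \<B>_def)
    moreover have "z ` C \<inter> B \<subseteq> z ` ({x\<in>C\<^sub>0. z x \<in> B} \<inter> C)" using \<open>C \<subseteq> C\<^sub>0\<close> by blast
    ultimately show ?thesis by (meson finite_imageI finite_subset)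
  qed
  ultimately show ?thesis using \<open>C \<subseteq> C\<^sub>0\<close> \<open>C \<notin> I\<close> by blast
qed

section \<open>Mrowka spaces\<close>

lemma mrowka_basis_Pt: "{Pt n} \<in> mrowka_basis \<A>"
  unfolding mrowka_basis_def by (intro UnI1) blast

lemma mrowka_basis_Ast: "A \<in> \<A> \<Longrightarrow> finite F \<Longrightarrow> {Ast A} \<union> Pt ` (A - F) \<in> mrowka_basis \<A>"
  unfolding mrowka_basis_def by (intro UnI1 UnI2) blast

lemma mrowka_basis_Infty:
  "finite F \<Longrightarrow> finite G \<Longrightarrow> G \<subseteq> \<A> \<Longrightarrow>
    {Infty} \<union> Ast ` (\<A> - G) \<union> Pt ` (UNIV - (F \<union> \<Union>G)) \<in> mrowka_basis \<A>"
  unfolding mrowka_basis_def by (intro UnI2) blast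

lemma mrowka_basis_cases:
  assumes "B \<in> mrowka_basis \<A>"
  obtains n where "B = {Pt n}"
  | A F where "A \<in> \<A>" "finite F" "B = {Ast A} \<union> Pt ` (A - F)"
  | F G where "finite F" "finite G" "G \<subseteq> \<A>" "B = {Infty} \<union> Ast ` (\<A> - G) \<union> Pt ` (UNIV - (F \<union> \<Union>G))"
  using assms unfolding mrowka_basis_def by (auto simp only: Un_iff mem_Collect_eq)

lemma topspace_mrowka: "topspace (mrowka \<A>) = range Pt \<union> Ast ` \<A> \<union> {Infty}"
proof -
  have "\<Union>(mrowka_basis \<A>) \<subseteq> range Pt \<union> Ast ` \<A> \<union> {Infty}"
    unfolding mrowka_basis_def by blast
  moreover have "range Pt \<union> Ast ` \<A> \<union> {Infty} \<subseteq> \<Union>(mrowka_basis \<A>)"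
    using mrowka_basis_Pt mrowka_basis_Ast[of _ \<A> "{}"] mrowka_basis_Infty[of "{}" "{}" \<A>] by blast
  ultimately show ?thesis
    unfolding mrowka_def topology_generated_by_topspace by blast
qed

lemma openin_mrowka_basis: "B \<in> mrowka_basis \<A> \<Longrightarrow> openin (mrowka \<A>) B"
  unfolding mrowka_def by (rule topology_generated_by_Basis)

definition mrowka_separated :: "nat set set \<Rightarrow> mpt \<Rightarrow> mpt \<Rightarrow> bool" where
  "mrowka_separated \<A> p q \<longleftrightarrow>
    (\<exists>U\<in>mrowka_basis \<A>. \<exists>V\<in>mrowka_basis \<A>. p \<in> U \<and> q \<in> V \<and> U \<inter> V = {})"

lemma mrowka_separatedI:
  "U \<in> mrowka_basis \<A> \<Longrightarrow> V \<in> mrowka_basis \<A> \<Longrightarrow> p \<in> U \<Longrightarrow> q \<in> V \<Longrightarrow> U \<inter> V = {}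
    \<Longrightarrow> mrowka_separated \<A> p q"
  unfolding mrowka_separated_def by blast

lemma mrowka_separated_sym: "mrowka_separated \<A> p q \<Longrightarrow> mrowka_separated \<A> q p"
  unfolding mrowka_separated_def by blast

lemma mrowka_separated_Pt:
  assumes "q \<in> topspace (mrowka \<A>)" and "q \<noteq> Pt n"
  shows "mrowka_separated \<A> (Pt n) q"
proof -
  consider m where "q = Pt m" | A where "q = Ast A" "A \<in> \<A>" | "q = Infty"
    using assms(1) by (auto simp: topspace_mrowka)
  then show ?thesis
  proof cases
    case 1
    then show ?thesis
      by (intro mrowka_separatedI[OF mrowka_basis_Pt mrowka_basis_Pt]) (use \<open>q \<noteq> Pt n\<close> in auto)
  next
    case (2 A)
    then show ?thesis
      by (intro mrowka_separatedI[OF mrowka_basis_Pt mrowka_basis_Ast[of A \<A> "{n}"]]) auto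
  next
    case 3
    then show ?thesis
      by (intro mrowka_separatedI[OF mrowka_basis_Pt mrowka_basis_Infty[of "{n}" "{}" \<A>]]) auto
  qed
qed

lemma mrowka_separated_Ast_Ast:
  assumes "A \<in> \<A>" "B \<in> \<A>" "A \<noteq> B" and "finite (A \<inter> B)"
  shows "mrowka_separated \<A> (Ast A) (Ast B)"
  by (intro mrowka_separatedI[OF mrowka_basis_Ast[of A \<A> "A \<inter> B"] mrowka_basis_Ast[of B \<A> "A \<inter> B"]])
    (use assms in auto)

lemma mrowka_separated_Ast_Infty: "A \<in> \<A> \<Longrightarrow> mrowka_separated \<A> (Ast A) Infty"
  by (intro mrowka_separatedI[OF mrowka_basis_Ast[of A \<A> "{}"] mrowka_basis_Infty[of "{}" "{A}" \<A>]])
    auto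

lemma mrowka_separated_distinct:
  assumes ad: "pairwise (\<lambda>A B. finite (A \<inter> B)) \<A>"
    and p: "p \<in> topspace (mrowka \<A>)" and q: "q \<in> topspace (mrowka \<A>)" and "p \<noteq> q"
  shows "mrowka_separated \<A> p q"
proof (cases p)
  case (Pt n)
  then show ?thesis using mrowka_separated_Pt[OF q] \<open>p \<noteq> q\<close> by simp
next
  case (Ast A)
  then have "A \<in> \<A>" using p by (auto simp: topspace_mrowka)
  show ?thesis
  proof (cases q)
    case (Pt m)
    then show ?thesis using mrowka_separated_sym[OF mrowka_separated_Pt[OF p]] \<open>p \<noteq> q\<close> by simp
  next
    case (Ast B)
    then have "B \<in> \<A>" "A \<noteq> B" using q \<open>p = Ast A\<close> \<open>p \<noteq> q\<close> by (auto simp: topspace_mrowka)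
    then have "finite (A \<inter> B)" using ad \<open>A \<in> \<A>\<close> by (simp add: pairwise_def)
    then show ?thesis
      using mrowka_separated_Ast_Ast \<open>A \<in> \<A>\<close> \<open>B \<in> \<A>\<close> \<open>A \<noteq> B\<close> \<open>p = Ast A\<close> \<open>q = Ast B\<close>
      by simp
  next
    case Infty
    then show ?thesis using mrowka_separated_Ast_Infty[OF \<open>A \<in> \<A>\<close>] \<open>p = Ast A\<close> by simp
  qed
next
  case Infty
  show ?thesis
  proof (cases q)
    case (Pt m)
    then show ?thesis using mrowka_separated_sym[OF mrowka_separated_Pt[OF p]] \<open>p \<noteq> q\<close> by simp
  next
    case (Ast B)
    then have "B \<in> \<A>" using q by (auto simp: topspace_mrowka)
    then show ?thesis
      using mrowka_separated_sym[OF mrowka_separated_Ast_Infty] \<open>p = Infty\<close> \<open>q = Ast B\<close> by simp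
  qed (use \<open>p \<noteq> q\<close> \<open>p = Infty\<close> in simp)
qed

lemma Hausdorff_space_mrowka:
  assumes "pairwise (\<lambda>A B. finite (A \<inter> B)) \<A>"
  shows "Hausdorff_space (mrowka \<A>)"
  using mrowka_separated_distinct[OF assms] openin_mrowka_basis
  unfolding Hausdorff_space_def mrowka_separated_def disjnt_def by meson

lemma eventually_cofinite_principal_iff:
  "eventually P (inf cofinite (principal C)) \<longleftrightarrow> finite {n\<in>C. \<not> P n}"
proof -
  have "{n. \<not> (n \<in> C \<longrightarrow> P n)} = {n\<in>C. \<not> P n}" by blast
  then show ?thesis by (simp add: eventually_inf_principal eventually_cofinite)
qed

lemma limitin_constant_on:
  assumes "p \<in> topspace T" and "\<forall>n\<in>C. x n = p"
  shows "limitin T x p (inf cofinite (principal C))"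
proof (rule limitin_eventually[OF assms(1)])
  have "{n\<in>C. x n \<noteq> p} = {}" using assms(2) by blast
  then show "eventually (\<lambda>n. x n = p) (inf cofinite (principal C))"
    unfolding eventually_cofinite_principal_iff by (metis finite.emptyI)
qed

lemma limitin_mrowka_basis:
  assumes "L \<in> topspace (mrowka \<A>)"
    and basic: "\<And>B. B \<in> mrowka_basis \<A> \<Longrightarrow> L \<in> B \<Longrightarrow> eventually (\<lambda>n. x n \<in> B) F"
  shows "limitin (mrowka \<A>) x L F"
  unfolding limitin_def
proof (intro conjI allI impI)
  fix U assume "openin (mrowka \<A>) U \<and> L \<in> U"
  then have "generate_topology_on (mrowka_basis \<A>) U" and "L \<in> U"
    unfolding mrowka_def openin_topology_generated_by_iff by auto
  then show "eventually (\<lambda>n. x n \<in> U) F"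
  proof (induction rule: generate_topology_on.induct)
    case (Int a b)
    then show ?case by (simp add: eventually_conj)
  next
    case (UN K)
    then obtain k where "k \<in> K" "L \<in> k" by blast
    with UN.IH show ?case by (blast intro: eventually_mono)
  qed (use basic in auto)
qed (rule assms(1))

lemma limitin_mrowka_Infty:
  assumes "\<forall>n\<in>C. x n \<in> Ast ` \<A> \<union> {Infty}" and finite_fibres: "\<And>p. finite {n\<in>C. x n = p}"
  shows "limitin (mrowka \<A>) x Infty (inf cofinite (principal C))"
proof (rule limitin_mrowka_basis)
  show "Infty \<in> topspace (mrowka \<A>)" by (simp add: topspace_mrowka)
  fix B assume "B \<in> mrowka_basis \<A>" "Infty \<in> B"
  then obtain F G where "finite G" and B: "B = {Infty} \<union> Ast ` (\<A> - G) \<union> Pt ` (UNIV - (F \<union> \<Union>G))"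
    by (cases rule: mrowka_basis_cases) auto
  have "{n\<in>C. x n \<notin> B} \<subseteq> (\<Union>A\<in>G. {n\<in>C. x n = Ast A})"
  proof
    fix n assume n: "n \<in> {n\<in>C. x n \<notin> B}"
    then obtain A where "A \<in> \<A>" "x n = Ast A" using assms(1) B by auto
    with n B show "n \<in> (\<Union>A\<in>G. {n\<in>C. x n = Ast A})" by auto
  qed
  moreover have "finite (\<Union>A\<in>G. {n\<in>C. x n = Ast A})"
    using \<open>finite G\<close> finite_fibres by blast
  ultimately show "eventually (\<lambda>n. x n \<in> B) (inf cofinite (principal C))"
    unfolding eventually_cofinite_principal_iff by (rule finite_subset)
qed

lemma limitin_mrowka_Ast:
  assumes ad: "pairwise (\<lambda>A B. finite (A \<inter> B)) \<A>" and "A \<in> \<A>"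
    and points: "\<forall>n\<in>C. x n = Pt (z n)" and finite_fibres: "\<And>i. finite {n\<in>C. z n = i}"
    and almost_in: "finite {n\<in>C. z n \<notin> A}"
  shows "limitin (mrowka \<A>) x (Ast A) (inf cofinite (principal C))"
proof (rule limitin_mrowka_basis)
  show "Ast A \<in> topspace (mrowka \<A>)" using \<open>A \<in> \<A>\<close> by (simp add: topspace_mrowka)
  fix B assume "B \<in> mrowka_basis \<A>" "Ast A \<in> B"
  then obtain S where "finite S" and S: "\<forall>i\<in>A - S. Pt i \<in> B"
  proof (cases rule: mrowka_basis_cases)
    case (2 A' F)
    then show ?thesis using \<open>Ast A \<in> B\<close> that[of F] by auto
  next
    case (3 F G)
    then have "A \<notin> G" using \<open>Ast A \<in> B\<close> by auto
    have "finite (A \<inter> B')" if "B' \<in> G" for B'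
    proof -
      have "B' \<in> \<A>" "A \<noteq> B'" using \<open>G \<subseteq> \<A>\<close> \<open>A \<notin> G\<close> that by auto
      then show ?thesis using ad \<open>A \<in> \<A>\<close> by (simp add: pairwise_def)
    qed
    then have "finite (F \<union> (\<Union>B'\<in>G. A \<inter> B'))"
      using \<open>finite F\<close> \<open>finite G\<close> by blast
    then show ?thesis using 3 by (intro that[of "F \<union> (\<Union>B'\<in>G. A \<inter> B')"]) auto
  qed (use \<open>Ast A \<in> B\<close> in auto)
  have "{n\<in>C. x n \<notin> B} \<subseteq> {n\<in>C. z n \<notin> A} \<union> {n\<in>C. z n \<in> S}"
    using points S by auto
  moreover have "finite ({n\<in>C. z n \<notin> A} \<union> {n\<in>C. z n \<in> S})"
    using almost_in finite_preimage_if_finite_fibres[OF finite_fibres \<open>finite S\<close>] by blast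
  ultimately show "eventually (\<lambda>n. x n \<in> B) (inf cofinite (principal C))"
    unfolding eventually_cofinite_principal_iff by (rule finite_subset)
qed

lemma limitin_mrowka_injective_points:
  assumes "inj_on g B" and "infinite B"
    and lim: "limitin (mrowka \<A>) (\<lambda>y. Pt (g y)) L (inf cofinite (principal B))"
  shows "(\<exists>A\<in>\<A>. L = Ast A \<and> finite {y\<in>B. g y \<notin> A}) \<or> (L = Infty \<and> (\<forall>A\<in>\<A>. finite {y\<in>B. g y \<in> A}))"
proof -
  have almost_all: "finite {y\<in>B. Pt (g y) \<notin> U}" if "U \<in> mrowka_basis \<A>" "L \<in> U" for U
    using lim openin_mrowka_basis[OF that(1)] that(2)
    unfolding limitin_def eventually_cofinite_principal_iff by blast
  have "L \<in> topspace (mrowka \<A>)" using lim by (simp add: limitin_def)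
  then consider m where "L = Pt m" | A where "L = Ast A" "A \<in> \<A>" | "L = Infty"
    by (auto simp: topspace_mrowka)
  then show ?thesis
  proof cases
    case (1 m)
    have "finite {y\<in>B. Pt (g y) \<notin> {Pt m}}" using almost_all[OF mrowka_basis_Pt] 1 by simp
    moreover have "finite {y\<in>B. g y = m}"
      by (rule finite_subset[OF _ finite_vimage_IntI[OF _ \<open>inj_on g B\<close>, of "{m}"]]) auto
    moreover have "B \<subseteq> {y\<in>B. Pt (g y) \<notin> {Pt m}} \<union> {y\<in>B. g y = m}" by auto
    ultimately have "finite B" by (meson finite_Un finite_subset)
    with \<open>infinite B\<close> show ?thesis by contradiction
  next
    case (2 A)
    have "{y\<in>B. Pt (g y) \<notin> {Ast A} \<union> Pt ` (A - {})} = {y\<in>B. g y \<notin> A}" by auto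
    then have "finite {y\<in>B. g y \<notin> A}"
      using almost_all[OF mrowka_basis_Ast[OF \<open>A \<in> \<A>\<close>, of "{}"]] 2 by simp
    then show ?thesis using 2 by blast
  next
    case 3
    have "finite {y\<in>B. g y \<in> A}" if "A \<in> \<A>" for A
    proof -
      let ?U = "{Infty} \<union> Ast ` (\<A> - {A}) \<union> Pt ` (UNIV - ({} \<union> \<Union>{A}))"
      have "?U \<in> mrowka_basis \<A>" using mrowka_basis_Infty[of "{}" "{A}" \<A>] that by simp
      moreover have "L \<in> ?U" using 3 by simp
      ultimately have "finite {y\<in>B. Pt (g y) \<notin> ?U}" by (rule almost_all)
      moreover have "{y\<in>B. Pt (g y) \<notin> ?U} = {y\<in>B. g y \<in> A}" by auto
      ultimately show ?thesis by simp
    qed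
    then show ?thesis using 3 by blast
  qed
qed

section \<open>Convergence along positive sets\<close>

text \<open>Either way the points \<open>Pt (z x)\<close> converge along an \<open>I\<close>-positive set: to some \<open>Pt i\<close> in the
  first case, to \<open>Ast A\<close> in the second.\<close>
definition catches :: "'a set \<Rightarrow> 'a set set \<Rightarrow> ('a \<Rightarrow> nat) \<Rightarrow> nat set set \<Rightarrow> bool" where
  "catches X I z \<A> \<longleftrightarrow> (\<exists>i. {x\<in>X. z x = i} \<notin> I) \<or>
     (\<exists>C\<subseteq>X. C \<notin> I \<and> (\<forall>i. finite {x\<in>C. z x = i}) \<and> (\<exists>A\<in>\<A>. finite {x\<in>C. z x \<notin> A}))"

lemma catchesI:
  assumes "C \<subseteq> X" "C \<notin> I" "\<forall>i. finite {x\<in>C. z x = i}" "A \<in> \<A>" "z ` C \<subseteq> A"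
  shows "catches X I z \<A>"
proof -
  have "{x\<in>C. z x \<notin> A} = {}" using \<open>z ` C \<subseteq> A\<close> by blast
  then have "finite {x\<in>C. z x \<notin> A}" by (metis finite.emptyI)
  then show ?thesis using assms unfolding catches_def by blast
qed

lemma catches_mono: "catches X I z \<A> \<Longrightarrow> \<A> \<subseteq> \<B> \<Longrightarrow> catches X I z \<B>"
  unfolding catches_def by blast

lemma catches_cong:
  assumes "\<forall>x\<in>X. z x = z' x" and "catches X I z \<A>"
  shows "catches X I z' \<A>"
proof -
  have same: "{x\<in>C. P (z x)} = {x\<in>C. P (z' x)}" if "C \<subseteq> X" for C P
    using assms(1) that by auto
  consider (fibre) i where "{x\<in>X. z x = i} \<notin> I"
    | (thin) C A where "C \<subseteq> X" "C \<notin> I" "\<forall>i. finite {x\<in>C. z x = i}" "A \<in> \<A>"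
        "finite {x\<in>C. z x \<notin> A}"
    using assms(2) unfolding catches_def by blast
  then show ?thesis
  proof cases
    case fibre
    then show ?thesis using same[of X "\<lambda>v. v = i"] unfolding catches_def by auto
  next
    case thin
    then show ?thesis
      using same[of C "\<lambda>v. v = i" for i] same[of C "\<lambda>v. v \<notin> A"] unfolding catches_def by auto
  qed
qed

lemma mrowka_convergent_off_points:
  assumes I: "is_ideal X I" and hw: "hereditary_weak_P X I" and "Q \<subseteq> X" "Q \<notin> I"
    and off_points: "\<forall>n\<in>Q. x n \<in> Ast ` \<A> \<union> {Infty}" and fibres: "\<And>p. {n\<in>Q. x n = p} \<in> I"
  shows "\<exists>C\<subseteq>Q. C \<notin> I \<and> limitin (mrowka \<A>) x Infty (inf cofinite (principal C))"
proof -
  obtain C where "C \<subseteq> Q" "C \<notin> I" and finite_fibres: "\<forall>p. finite {n\<in>C. x n = p}"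
    using hereditary_weak_P_finite_fibres[OF I hw \<open>Q \<subseteq> X\<close> \<open>Q \<notin> I\<close> fibres] by blast
  moreover have "limitin (mrowka \<A>) x Infty (inf cofinite (principal C))"
    using off_points \<open>C \<subseteq> Q\<close> finite_fibres by (intro limitin_mrowka_Infty) auto
  ultimately show ?thesis by blast
qed

lemma mrowka_convergent_on_points:
  assumes I: "is_ideal X I" and ad: "pairwise (\<lambda>A B. finite (A \<inter> B)) \<A>"
    and "catches X I z \<A>" and fibres: "\<And>i. {n\<in>X. z n = i} \<in> I"
    and "Q \<in> I" and points: "\<forall>n\<in>X - Q. x n = Pt (z n)"
  shows "\<exists>C\<subseteq>X. C \<notin> I \<and> (\<exists>L. limitin (mrowka \<A>) x L (inf cofinite (principal C)))"
proof -
  obtain C A where "C \<subseteq> X" "C \<notin> I" and finite_fibres: "\<forall>i. finite {n\<in>C. z n = i}"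
    and "A \<in> \<A>" and almost_in: "finite {n\<in>C. z n \<notin> A}"
    using \<open>catches X I z \<A>\<close> fibres unfolding catches_def by blast
  have "limitin (mrowka \<A>) x (Ast A) (inf cofinite (principal (C - Q)))"
  proof (rule limitin_mrowka_Ast[OF ad \<open>A \<in> \<A>\<close>])
    show "\<forall>n\<in>C - Q. x n = Pt (z n)" using points \<open>C \<subseteq> X\<close> by blast
    show "finite {n\<in>C - Q. z n = i}" for i
      by (rule finite_subset[OF _ finite_fibres[rule_format, of i]]) blast
    show "finite {n\<in>C - Q. z n \<notin> A}"
      by (rule finite_subset[OF _ almost_in]) blast
  qed
  moreover have "C - Q \<notin> I" using ideal_positive_Diff[OF I \<open>C \<notin> I\<close> \<open>Q \<in> I\<close>] .
  ultimately show ?thesis using \<open>C \<subseteq> X\<close> by (intro exI[of _ "C - Q"]) auto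
qed

lemma FinBW_mrowka:
  assumes "I \<subseteq> I'" and I': "is_ideal X I'" and hw: "hereditary_weak_P X I'"
    and ad: "pairwise (\<lambda>A B. finite (A \<inter> B)) \<A>" and catches: "\<And>z. catches X I' z \<A>"
  shows "FinBW X I (mrowka \<A>)"
  unfolding FinBW_def
proof (intro conjI allI impI)
  show "Hausdorff_space (mrowka \<A>)" using ad by (rule Hausdorff_space_mrowka)
  fix x assume x: "\<forall>n\<in>X. x n \<in> topspace (mrowka \<A>)"
  have "\<exists>C\<subseteq>X. C \<notin> I' \<and> (\<exists>L. limitin (mrowka \<A>) x L (inf cofinite (principal C)))"
  proof (cases "\<exists>p. {n\<in>X. x n = p} \<notin> I'")
    case True
    then obtain p where p: "{n\<in>X. x n = p} \<notin> I'" by blast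
    then have "{n\<in>X. x n = p} \<noteq> {}" using ideal_empty[OF I'] by metis
    then have "p \<in> topspace (mrowka \<A>)" using x by blast
    then have "limitin (mrowka \<A>) x p (inf cofinite (principal {n\<in>X. x n = p}))"
      by (rule limitin_constant_on) simp
    with p show ?thesis by (intro exI[of _ "{n\<in>X. x n = p}"]) auto
  next
    case False
    then have fibres: "\<And>p. {n\<in>X. x n = p} \<in> I'" by blast
    define Q where "Q = {n\<in>X. x n \<notin> range Pt}"
    show ?thesis
    proof (cases "Q \<in> I'")
      case False
      have "Q \<subseteq> X" by (auto simp: Q_def)
      have "\<forall>n\<in>Q. x n \<in> Ast ` \<A> \<union> {Infty}"
        using x by (auto simp: Q_def topspace_mrowka)
      moreover have "{n\<in>Q. x n = p} \<in> I'" for p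
        by (rule ideal_subset[OF I' fibres[of p]]) (auto simp: Q_def)
      ultimately obtain C where "C \<subseteq> Q" "C \<notin> I'"
        and "limitin (mrowka \<A>) x Infty (inf cofinite (principal C))"
        using mrowka_convergent_off_points[OF I' hw \<open>Q \<subseteq> X\<close> False] by blast
      then show ?thesis using \<open>Q \<subseteq> X\<close> by (intro exI[of _ C]) auto
    next
      case True
      define z where "z n = (case x n of Pt m \<Rightarrow> m | _ \<Rightarrow> 0)" for n
      have points: "\<forall>n\<in>X - Q. x n = Pt (z n)"
        by (auto simp: Q_def z_def)
      then have "{n\<in>X. z n = i} \<subseteq> {n\<in>X. x n = Pt i} \<union> Q" for i
        by blast
      then have "{n\<in>X. z n = i} \<in> I'" for i
        by (rule ideal_subset[OF I' ideal_Un[OF I' fibres True]])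
      then show ?thesis
        by (rule mrowka_convergent_on_points[OF I' ad catches _ True points])
    qed
  qed
  then show "\<exists>C\<subseteq>X. C \<notin> I \<and> (\<exists>L. limitin (mrowka \<A>) x L (inf cofinite (principal C)))"
    using \<open>I \<subseteq> I'\<close> by blast
qed

section \<open>Almost disjoint families inside an ideal on \<omega>\<close>

definition image_ideal :: "'b set \<Rightarrow> 'b set set \<Rightarrow> ('b \<Rightarrow> nat) \<Rightarrow> nat set set" where
  "image_ideal Y J g = {D. {y\<in>Y. g y \<in> D} \<in> J}"

lemma is_ideal_image_ideal:
  assumes J: "is_ideal Y J" and g: "bij_betw g Y UNIV"
  shows "is_ideal UNIV (image_ideal Y J g)"
proof -
  have sub: "D \<in> image_ideal Y J g" if "D' \<in> image_ideal Y J g" "D \<subseteq> D'" for D D'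
  proof -
    have "{y\<in>Y. g y \<in> D} \<subseteq> {y\<in>Y. g y \<in> D'}" using \<open>D \<subseteq> D'\<close> by blast
    then show ?thesis using that(1) ideal_subset[OF J] unfolding image_ideal_def by simp
  qed
  have un: "D \<union> D' \<in> image_ideal Y J g" if "D \<in> image_ideal Y J g" "D' \<in> image_ideal Y J g" for D D'
  proof -
    have "{y\<in>Y. g y \<in> D \<union> D'} = {y\<in>Y. g y \<in> D} \<union> {y\<in>Y. g y \<in> D'}" by blast
    then show ?thesis using that ideal_Un[OF J] unfolding image_ideal_def by simp
  qed
  have fin: "F \<in> image_ideal Y J g" if "finite F" for F
  proof -
    have "finite {y\<in>Y. g y \<in> F}"
      using finite_vimage_IntI[OF that bij_betw_imp_inj_on[OF g]] by (simp add: Int_def conj_commute)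
    then show ?thesis using ideal_finite[OF J] unfolding image_ideal_def by simp
  qed
  have top: "UNIV \<notin> image_ideal Y J g"
    using ideal_carrier_notin[OF J] unfolding image_ideal_def by simp
  show ?thesis
    unfolding is_ideal_def by (intro conjI allI impI) (auto intro: sub un fin simp: top)
qed

lemma katetov_le_image_ideal:
  assumes I: "is_ideal X I" and J: "is_ideal Y J" and g: "bij_betw g Y UNIV"
    and "katetov_le (image_ideal Y J g) I"
  shows "katetov_le J I"
proof -
  obtain f where f: "\<forall>B\<in>image_ideal Y J g. {x\<in>X. f x \<in> B} \<in> I"
    using assms(4) unfolding katetov_le_def ideal_Union[OF I] by blast
  define h where "h x = inv_into Y g (f x)" for x
  have h: "h x \<in> Y" and g_h: "g (h x) = f x" for x
    using g unfolding h_def bij_betw_def by (auto intro: inv_into_into f_inv_into_f)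
  have "{x\<in>X. h x \<in> B} \<in> I" if "B \<in> J" for B
  proof -
    have "{y\<in>Y. g y \<in> g ` B} = B"
      using ideal_subset_carrier[OF J that] bij_betw_imp_inj_on[OF g] by (auto dest: inj_onD)
    then have "g ` B \<in> image_ideal Y J g" using that unfolding image_ideal_def by simp
    then have "{x\<in>X. f x \<in> g ` B} \<in> I" using f by blast
    moreover have "{x\<in>X. h x \<in> B} \<subseteq> {x\<in>X. f x \<in> g ` B}"
      using g_h by (metis (mono_tags, lifting) Collect_mono image_eqI)
    ultimately show ?thesis by (rule ideal_subset[OF I])
  qed
  then show ?thesis
    unfolding katetov_le_def ideal_Union[OF I] ideal_Union[OF J] using h by blast
qed

lemma not_katetov_le_nat:
  assumes I: "is_ideal X I" and K: "is_ideal (UNIV :: nat set) K" and "\<not> katetov_le K I"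
  shows "\<exists>D\<in>K. {x\<in>X. z x \<in> D} \<notin> I"
  using assms(3) unfolding katetov_le_def ideal_Union[OF I] ideal_Union[OF K] by blast

lemma not_katetov_le_infinite_subset:
  assumes I: "is_ideal X I" and K: "is_ideal (UNIV :: nat set) K" and "\<not> katetov_le K I"
    and "D \<notin> K"
  shows "\<exists>E\<subseteq>D. infinite E \<and> E \<in> K"
proof -
  have "infinite D" using ideal_finite[OF K] \<open>D \<notin> K\<close> by blast
  have "countable X" by (rule ideal_countable[OF I])
  define z where "z x = from_nat_into D (to_nat_on X x)" for x
  have z: "z x \<in> D" for x
    unfolding z_def using \<open>infinite D\<close> by (metis from_nat_into infinite_imp_nonempty)
  have "inj_on z X"
  proof (rule inj_onI)
    fix a b assume "a \<in> X" "b \<in> X" "z a = z b"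
    then have "to_nat_on X a = to_nat_on X b"
      using \<open>infinite D\<close> by (simp add: z_def countableI_type)
    then show "a = b"
      using \<open>a \<in> X\<close> \<open>b \<in> X\<close> \<open>countable X\<close> by simp
  qed
  obtain D' where "D' \<in> K" and P: "{x\<in>X. z x \<in> D'} \<notin> I"
    using not_katetov_le_nat[OF I K assms(3)] by blast
  define E where "E = z ` {x\<in>X. z x \<in> D'}"
  have "infinite {x\<in>X. z x \<in> D'}"
    by (rule ideal_positive_infinite[OF I _ P]) blast
  moreover have "inj_on z {x\<in>X. z x \<in> D'}"
    by (rule inj_on_subset[OF \<open>inj_on z X\<close>]) blast
  ultimately have "infinite E"
    unfolding E_def using finite_imageD by blast
  moreover have "E \<in> K"
    unfolding E_def by (rule ideal_subset[OF K \<open>D' \<in> K\<close>]) blast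
  moreover have "E \<subseteq> D"
    unfolding E_def using z by blast
  ultimately show ?thesis by blast
qed

definition almost_disjoint :: "nat set set \<Rightarrow> bool" where
  "almost_disjoint \<A> \<longleftrightarrow> (\<forall>A\<in>\<A>. infinite A) \<and> pairwise (\<lambda>A B. finite (A \<inter> B)) \<A>"

lemma almost_disjoint_family_iff: "almost_disjoint_family \<A> \<longleftrightarrow> infinite \<A> \<and> almost_disjoint \<A>"
  unfolding almost_disjoint_family_def almost_disjoint_def pairwise_def by blast

lemma almost_disjoint_extend_maximal:
  assumes "almost_disjoint \<A>\<^sub>0" and "\<A>\<^sub>0 \<subseteq> K"
  shows "\<exists>\<A>. \<A>\<^sub>0 \<subseteq> \<A> \<and> almost_disjoint \<A> \<and> \<A> \<subseteq> K \<and>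
    (\<forall>E\<in>K. infinite E \<longrightarrow> (\<exists>A\<in>\<A>. infinite (E \<inter> A)))"
proof -
  define \<F> where "\<F> = {\<A>. \<A>\<^sub>0 \<subseteq> \<A> \<and> almost_disjoint \<A> \<and> \<A> \<subseteq> K}"
  have "\<Union>\<C> \<in> \<F>" if "\<C> \<noteq> {}" and chain: "subset.chain \<F> \<C>" for \<C>
  proof -
    have "\<C> \<subseteq> \<F>" and "chain\<^sub>\<subseteq> \<C>"
      using chain unfolding subset.chain_def chain_subset_def by auto
    then have "pairwise (\<lambda>A B. finite (A \<inter> B)) (\<Union>\<C>)"
      by (intro pairwise_chain_Union) (auto simp: \<F>_def almost_disjoint_def)
    moreover obtain \<A> where "\<A> \<in> \<C>" using \<open>\<C> \<noteq> {}\<close> by blast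
    then have "\<A>\<^sub>0 \<subseteq> \<Union>\<C>" using \<open>\<C> \<subseteq> \<F>\<close> by (auto simp: \<F>_def)
    ultimately show ?thesis
      using \<open>\<C> \<subseteq> \<F>\<close> by (auto simp: \<F>_def almost_disjoint_def)
  qed
  moreover have "\<F> \<noteq> {}"
    using assms unfolding \<F>_def by blast
  ultimately obtain \<M> where "\<M> \<in> \<F>" and max: "\<And>\<A>. \<A> \<in> \<F> \<Longrightarrow> \<M> \<subseteq> \<A> \<Longrightarrow> \<A> = \<M>"
    using subset_Zorn_nonempty[of \<F>] by blast
  have "\<exists>A\<in>\<M>. infinite (E \<inter> A)" if "E \<in> K" "infinite E" for E
  proof (rule ccontr)
    assume "\<not> ?thesis"
    then have finite_meets: "finite (E \<inter> A)" if "A \<in> \<M>" for A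
      using that by blast
    then have "insert E \<M> \<in> \<F>"
      using \<open>\<M> \<in> \<F>\<close> \<open>E \<in> K\<close> \<open>infinite E\<close>
      by (auto simp: \<F>_def almost_disjoint_def pairwise_insert Int_commute)
    then have "E \<in> \<M>" using max by blast
    then show False using finite_meets[of E] \<open>infinite E\<close> by simp
  qed
  then show ?thesis using \<open>\<M> \<in> \<F>\<close> unfolding \<F>_def by blast
qed

lemma almost_disjoint_extend_meeting_positive_sets:
  assumes I: "is_ideal X I" and K: "is_ideal (UNIV :: nat set) K" and "\<not> katetov_le K I"
    and "almost_disjoint \<A>\<^sub>0" "\<A>\<^sub>0 \<subseteq> K"
  shows "\<exists>\<A>. \<A>\<^sub>0 \<subseteq> \<A> \<and> almost_disjoint \<A> \<and> \<A> \<subseteq> K \<and> (\<forall>D. D \<notin> K \<longrightarrow> (\<exists>A\<in>\<A>. infinite (D \<inter> A)))"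
proof -
  obtain \<A> where "\<A>\<^sub>0 \<subseteq> \<A>" "almost_disjoint \<A>" "\<A> \<subseteq> K"
    and maximal: "\<forall>E\<in>K. infinite E \<longrightarrow> (\<exists>A\<in>\<A>. infinite (E \<inter> A))"
    using almost_disjoint_extend_maximal[OF \<open>almost_disjoint \<A>\<^sub>0\<close> \<open>\<A>\<^sub>0 \<subseteq> K\<close>] by blast
  have "\<exists>A\<in>\<A>. infinite (D \<inter> A)" if "D \<notin> K" for D
  proof -
    obtain E where "E \<subseteq> D" "infinite E" "E \<in> K"
      using not_katetov_le_infinite_subset[OF I K \<open>\<not> katetov_le K I\<close> \<open>D \<notin> K\<close>] by blast
    then obtain A where "A \<in> \<A>" "infinite (E \<inter> A)" using maximal by blast
    moreover have "E \<inter> A \<subseteq> D \<inter> A" using \<open>E \<subseteq> D\<close> by blast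
    ultimately show ?thesis using finite_subset by blast
  qed
  with \<open>\<A>\<^sub>0 \<subseteq> \<A>\<close> \<open>almost_disjoint \<A>\<close> \<open>\<A> \<subseteq> K\<close> show ?thesis by blast
qed

lemma infinite_if_meets_positive_sets:
  assumes K: "is_ideal (UNIV :: nat set) K" and "\<A> \<subseteq> K"
    and meets: "\<And>D. D \<notin> K \<Longrightarrow> \<exists>A\<in>\<A>. infinite (D \<inter> A)"
  shows "infinite \<A>"
proof
  assume "finite \<A>"
  then have "\<Union>\<A> \<in> K"
    using ideal_UN[OF K \<open>finite \<A>\<close>, of "\<lambda>A. A"] \<open>\<A> \<subseteq> K\<close> by auto
  then have "- \<Union>\<A> \<notin> K"
    using ideal_Un[OF K, of "- \<Union>\<A>" "\<Union>\<A>"] ideal_carrier_notin[OF K] by auto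
  then obtain A where "A \<in> \<A>" and infinite: "infinite (- \<Union>\<A> \<inter> A)" using meets by blast
  then have "- \<Union>\<A> \<inter> A = {}" by blast
  with infinite show False by simp
qed

lemma not_FinBW_mrowka:
  assumes J: "is_ideal Y J" and g: "bij_betw g Y UNIV" and "\<A> \<subseteq> image_ideal Y J g"
    and meets: "\<And>D. D \<notin> image_ideal Y J g \<Longrightarrow> \<exists>A\<in>\<A>. infinite (D \<inter> A)"
  shows "\<not> FinBW Y J (mrowka \<A>)"
proof
  assume FinBW: "FinBW Y J (mrowka \<A>)"
  have "\<forall>y\<in>Y. Pt (g y) \<in> topspace (mrowka \<A>)" by (simp add: topspace_mrowka)
  then obtain B L where "B \<subseteq> Y" "B \<notin> J"
    and lim: "limitin (mrowka \<A>) (\<lambda>y. Pt (g y)) L (inf cofinite (principal B))"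
    using FinBW[unfolded FinBW_def, THEN conjunct2, rule_format, of "\<lambda>y. Pt (g y)"] by blast
  have "inj_on g B" using g \<open>B \<subseteq> Y\<close> by (auto simp: bij_betw_def intro: inj_on_subset)
  moreover have "infinite B" using ideal_positive_infinite[OF J \<open>B \<subseteq> Y\<close> \<open>B \<notin> J\<close>] .
  ultimately consider A where "A \<in> \<A>" "finite {y\<in>B. g y \<notin> A}"
    | "\<forall>A\<in>\<A>. finite {y\<in>B. g y \<in> A}"
    using limitin_mrowka_injective_points[OF _ _ lim] by blast
  then show False
  proof cases
    case (1 A)
    have "{y\<in>B. g y \<notin> A} \<in> J"
      by (rule ideal_finite[OF J _ \<open>finite {y\<in>B. g y \<notin> A}\<close>]) (use \<open>B \<subseteq> Y\<close> in blast)
    moreover have "{y\<in>Y. g y \<in> A} \<in> J"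
      using \<open>A \<in> \<A>\<close> \<open>\<A> \<subseteq> image_ideal Y J g\<close> unfolding image_ideal_def by blast
    ultimately have "{y\<in>Y. g y \<in> A} \<union> {y\<in>B. g y \<notin> A} \<in> J"
      using ideal_Un[OF J] by blast
    moreover have "B \<subseteq> {y\<in>Y. g y \<in> A} \<union> {y\<in>B. g y \<notin> A}" using \<open>B \<subseteq> Y\<close> by blast
    ultimately have "B \<in> J" by (rule ideal_subset[OF J])
    with \<open>B \<notin> J\<close> show False by contradiction
  next
    case 2
    have "{y\<in>Y. g y \<in> g ` B} = B"
      using \<open>B \<subseteq> Y\<close> g by (auto simp: bij_betw_def dest: inj_onD)
    then have "g ` B \<notin> image_ideal Y J g" using \<open>B \<notin> J\<close> unfolding image_ideal_def by simp
    then obtain A where "A \<in> \<A>" and infinite: "infinite (g ` B \<inter> A)" using meets by blast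
    have "g ` B \<inter> A \<subseteq> g ` {y\<in>B. g y \<in> A}" by blast
    then show False using infinite 2 \<open>A \<in> \<A>\<close> by (meson finite_imageI finite_subset)
  qed
qed

section \<open>The construction under CH\<close>

lemma wf_total_exists: "\<exists>s :: 'a rel. wf s \<and> (\<forall>p q. p \<noteq> q \<longrightarrow> (p, q) \<in> s \<or> (q, p) \<in> s)"
proof -
  obtain r :: "'a rel" where r: "Well_order r" "Field r = UNIV"
    using well_ordering[where 'a = 'a] by blast
  then have "wf (r - Id)" and "total_on UNIV r"
    unfolding well_order_on_def linear_order_on_def by auto
  then show ?thesis
    unfolding total_on_def by (intro exI[of _ "r - Id"]) blast
qed

text \<open>Under CH the first uncountable initial segment of a well-order of \<open>\<P>(\<omega>)\<close> has size
  continuum; pulling the order back along a bijection with it gives an order of type \<open>\<omega>\<^sub>1\<close>.\<close>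
lemma CH_wf_countable_segments:
  assumes "CH"
  shows "\<exists>lt :: (nat set \<times> nat set) set. wf lt \<and> (\<forall>p q. p \<noteq> q \<longrightarrow> (p, q) \<in> lt \<or> (q, p) \<in> lt)
           \<and> (\<forall>q. countable {p. (p, q) \<in> lt})"
proof -
  obtain s :: "nat set rel" where "wf s" and total: "\<forall>p q. p \<noteq> q \<longrightarrow> (p, q) \<in> s \<or> (q, p) \<in> s"
    using wf_total_exists[where 'a = "nat set"] by blast
  define seg where "seg q = {p. (p, q) \<in> s}" for q
  show ?thesis
  proof (cases "\<forall>q. countable (seg q)")
    case True
    then show ?thesis using \<open>wf s\<close> total unfolding seg_def by blast
  next
    case False
    then obtain a0 where "a0 \<in> {q. \<not> countable (seg q)}" by blast
    then obtain a where a: "a \<in> {q. \<not> countable (seg q)}"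
      and below: "\<And>q. (q, a) \<in> s \<Longrightarrow> q \<notin> {q. \<not> countable (seg q)}"
      by (rule wfE_min[OF \<open>wf s\<close>]) (rule that)
    then have "seg a \<approx> (UNIV :: nat set set)"
      using \<open>CH\<close> unfolding CH_def by blast
    then obtain f :: "nat set \<Rightarrow> nat set" where "bij_betw f (seg a) UNIV"
      unfolding eqpoll_def by blast
    define h where "h = inv_into (seg a) f"
    have h: "bij_betw h UNIV (seg a)"
      unfolding h_def by (rule bij_betw_inv_into) fact
    define lt where "lt = inv_image s h"
    have "countable {p. (p, q) \<in> lt}" for q
    proof -
      have "h ` {p. (p, q) \<in> lt} \<subseteq> seg (h q)"
        by (auto simp: lt_def seg_def)
      moreover have "countable (seg (h q))"
        using below h by (auto simp: bij_betw_def seg_def)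
      ultimately have "countable (h ` {p. (p, q) \<in> lt})"
        by (rule countable_subset)
      moreover have "inj_on h {p. (p, q) \<in> lt}"
        using bij_betw_imp_inj_on[OF h] by (rule inj_on_subset) simp
      ultimately show ?thesis
        by (rule countable_image_inj_on)
    qed
    moreover have "wf lt" unfolding lt_def using \<open>wf s\<close> by (rule wf_inv_image)
    moreover have "(p, q) \<in> lt \<or> (q, p) \<in> lt" if "p \<noteq> q" for p q
    proof -
      have "h p \<noteq> h q" using bij_betw_imp_inj_on[OF h] that by (metis injD)
      then show ?thesis using total by (simp add: lt_def)
    qed
    ultimately show ?thesis by (intro exI[of _ lt]) blast
  qed
qed

text \<open>A function on the countable set \<open>X\<close> is coded by the set of codes of its graph, so
  enumerating all sets of naturals enumerates all functions \<open>X \<rightarrow> \<omega>\<close>.\<close>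
definition decode_fun :: "'a set \<Rightarrow> nat set \<Rightarrow> 'a \<Rightarrow> nat" where
  "decode_fun X T x = (LEAST m. prod_encode (to_nat_on X x, m) \<in> T)"

lemma decode_fun_surj:
  assumes "countable X"
  shows "\<exists>T. \<forall>x\<in>X. decode_fun X T x = z x"
proof -
  define T where "T = (\<lambda>x. prod_encode (to_nat_on X x, z x)) ` X"
  have "decode_fun X T x = z x" if "x \<in> X" for x
    unfolding decode_fun_def
  proof (rule Least_equality)
    show "prod_encode (to_nat_on X x, z x) \<in> T" using that by (simp add: T_def)
    fix m assume "prod_encode (to_nat_on X x, m) \<in> T"
    then obtain x' where "x' \<in> X" "to_nat_on X x = to_nat_on X x'" "m = z x'"
      by (auto simp: T_def prod_encode_eq)
    then show "z x \<le> m" using that assms by simp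
  qed
  then show ?thesis by blast
qed

lemma wf_recursive_choice:
  assumes "wf r" and choice: "\<And>f x. \<exists>y. R (f ` {z. (z, x) \<in> r}) x y"
  shows "\<exists>F. \<forall>x. R (F ` {z. (z, x) \<in> r}) x (F x)"
proof -
  define F where "F = wfrec r (\<lambda>f x. SOME y. R (f ` {z. (z, x) \<in> r}) x y)"
  have "F x = (SOME y. R (F ` {z. (z, x) \<in> r}) x y)" for x
  proof -
    have "cut F r x ` {z. (z, x) \<in> r} = F ` {z. (z, x) \<in> r}"
      using cut_apply[of _ x r F] by auto
    then show ?thesis
      unfolding F_def by (subst wfrec[OF \<open>wf r\<close>]) simp
  qed
  then show ?thesis using choice by (metis someI_ex)
qed

lemma transfinite_almost_disjoint_family:
  fixes lt :: "('q \<times> 'q) set" and P :: "'q \<Rightarrow> nat set set \<Rightarrow> bool"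
  assumes "wf lt" and total: "\<And>p q. p \<noteq> q \<Longrightarrow> (p, q) \<in> lt \<or> (q, p) \<in> lt"
    and segments: "\<And>q. countable {p. (p, q) \<in> lt}"
    and mono: "\<And>q \<A> \<B>. P q \<A> \<Longrightarrow> \<A> \<subseteq> \<B> \<Longrightarrow> P q \<B>"
    and step: "\<And>q \<A>. countable \<A> \<Longrightarrow>
      P q \<A> \<or> (\<exists>A\<in>K. infinite A \<and> (\<forall>B\<in>\<A>. finite (A \<inter> B)) \<and> P q (insert A \<A>))"
  shows "\<exists>\<A>\<subseteq>K. almost_disjoint \<A> \<and> (\<forall>q. P q \<A>)"
proof -
  \<comment> \<open>\<open>A = {}\<close> records a stage that needs no new member.\<close>
  define good where "good \<A> q A \<longleftrightarrow> A = {} \<and> P q \<A> \<or>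
    A \<in> K \<and> infinite A \<and> (\<forall>B\<in>\<A>. finite (A \<inter> B)) \<and> P q (insert A \<A>)" for \<A> q A
  have "\<exists>A. good (f ` {p. (p, q) \<in> lt} - {{}}) q A" for f q
  proof -
    have "countable (f ` {p. (p, q) \<in> lt} - {{}})" using segments by blast
    then show ?thesis using step unfolding good_def by blast
  qed
  then obtain F where F: "\<forall>q. good (F ` {p. (p, q) \<in> lt} - {{}}) q (F q)"
    using wf_recursive_choice[OF \<open>wf lt\<close>, of "\<lambda>\<A> q A. good (\<A> - {{}}) q A"] by blast
  define before where "before q = F ` {p. (p, q) \<in> lt} - {{}}" for q
  have good: "good (before q) q (F q)" for q
    using F by (simp add: before_def)
  define \<A> where "\<A> = range F - {{}}"
  have member: "F q \<in> K \<and> infinite (F q) \<and> (\<forall>B\<in>before q. finite (F q \<inter> B))" if "F q \<noteq> {}" for q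
    using good[of q] that unfolding good_def by blast
  have "\<A> \<subseteq> K" using member by (auto simp: \<A>_def)
  moreover have "almost_disjoint \<A>"
    unfolding almost_disjoint_def
  proof
    show "\<forall>A\<in>\<A>. infinite A" using member by (auto simp: \<A>_def)
    have "finite (F q \<inter> F p)" if "F p \<noteq> {}" "F q \<noteq> {}" "(p, q) \<in> lt" for p q
      using member[of q] that by (auto simp: before_def)
    then show "pairwise (\<lambda>A B. finite (A \<inter> B)) \<A>"
      unfolding pairwise_def \<A>_def using total by (metis DiffE imageE insertI1 inf_commute)
  qed
  moreover have "P q \<A>" for q
  proof -
    have "before q \<subseteq> \<A>" by (auto simp: before_def \<A>_def)
    consider "P q (before q)" | "F q \<noteq> {}" "P q (insert (F q) (before q))"
      using good[of q] unfolding good_def by (auto dest: infinite_imp_nonempty)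
    then show ?thesis
    proof cases
      case 1
      then show ?thesis using mono \<open>before q \<subseteq> \<A>\<close> by blast
    next
      case 2
      then have "insert (F q) (before q) \<subseteq> \<A>"
        using \<open>before q \<subseteq> \<A>\<close> by (auto simp: \<A>_def)
      then show ?thesis using mono 2(2) by blast
    qed
  qed
  ultimately show ?thesis by blast
qed

lemma catches_step:
  assumes I: "is_ideal X I" and hw: "hereditary_weak_P X I" and K: "is_ideal (UNIV :: nat set) K"
    and "\<not> katetov_le K I" and "countable \<A>"
  shows "catches X I z \<A> \<or> (\<exists>A\<in>K. infinite A \<and> (\<forall>B\<in>\<A>. finite (A \<inter> B)) \<and> catches X I z (insert A \<A>))"
proof (cases "\<exists>i. {x\<in>X. z x = i} \<notin> I")
  case True
  then show ?thesis unfolding catches_def by blast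
next
  case False
  obtain D where "D \<in> K" and E: "{x\<in>X. z x \<in> D} \<notin> I"
    using not_katetov_le_nat[OF I K \<open>\<not> katetov_le K I\<close>] by blast
  have "{x\<in>{x\<in>X. z x \<in> D}. z x = i} \<in> I" for i
    by (rule ideal_subset[OF I, of "{x\<in>X. z x = i}"]) (use False in auto)
  then obtain C\<^sub>0 where "C\<^sub>0 \<subseteq> {x\<in>X. z x \<in> D}" "C\<^sub>0 \<notin> I"
    and finite_fibres\<^sub>0: "\<forall>i. finite {x\<in>C\<^sub>0. z x = i}"
    using hereditary_weak_P_finite_fibres[OF I hw _ E] by blast
  then have "C\<^sub>0 \<subseteq> X" "z ` C\<^sub>0 \<subseteq> D" by auto
  have finite_fibres: "\<forall>i. finite {x\<in>C. z x = i}" if "C \<subseteq> C\<^sub>0" for C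
  proof
    show "finite {x\<in>C. z x = i}" for i
      by (rule finite_subset[OF _ finite_fibres\<^sub>0[rule_format, of i]]) (use that in blast)
  qed
  show ?thesis
  proof (cases "\<exists>B\<in>\<A>. {x\<in>C\<^sub>0. z x \<in> B} \<notin> I")
    case True
    then obtain B where "B \<in> \<A>" "{x\<in>C\<^sub>0. z x \<in> B} \<notin> I" by blast
    then have "catches X I z \<A>"
      using \<open>C\<^sub>0 \<subseteq> X\<close> finite_fibres[of "{x\<in>C\<^sub>0. z x \<in> B}"] by (intro catchesI) auto
    then show ?thesis ..
  next
    case False
    then obtain C where "C \<subseteq> C\<^sub>0" "C \<notin> I" "infinite (z ` C)" "\<forall>B\<in>\<A>. finite (z ` C \<inter> B)"
      using hereditary_weak_P_image_almost_disjoint[OF I hw \<open>C\<^sub>0 \<subseteq> X\<close> \<open>C\<^sub>0 \<notin> I\<close> finite_fibres\<^sub>0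
          \<open>countable \<A>\<close>] by blast
    moreover have "z ` C \<in> K"
      by (rule ideal_subset[OF K \<open>D \<in> K\<close>]) (use \<open>z ` C\<^sub>0 \<subseteq> D\<close> \<open>C \<subseteq> C\<^sub>0\<close> in blast)
    moreover have "catches X I z (insert (z ` C) \<A>)"
      using \<open>C \<subseteq> C\<^sub>0\<close> \<open>C\<^sub>0 \<subseteq> X\<close> \<open>C \<notin> I\<close> finite_fibres[of C] by (intro catchesI) auto
    ultimately show ?thesis by (intro disjI2 bexI[of _ "z ` C"]) simp_all
  qed
qed

lemma CH_catching_family:
  assumes "CH" and I: "is_ideal X I" and hw: "hereditary_weak_P X I"
    and K: "is_ideal (UNIV :: nat set) K" and "\<not> katetov_le K I"
  shows "\<exists>\<A>\<subseteq>K. almost_disjoint \<A> \<and> (\<forall>z. catches X I z \<A>)"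
proof -
  obtain lt :: "(nat set \<times> nat set) set" where "wf lt"
    and total: "\<forall>p q. p \<noteq> q \<longrightarrow> (p, q) \<in> lt \<or> (q, p) \<in> lt"
    and segments: "\<forall>q. countable {p. (p, q) \<in> lt}"
    using CH_wf_countable_segments[OF \<open>CH\<close>] by blast
  have step: "catches X I (decode_fun X T) \<A> \<or>
      (\<exists>A\<in>K. infinite A \<and> (\<forall>B\<in>\<A>. finite (A \<inter> B)) \<and> catches X I (decode_fun X T) (insert A \<A>))"
    if "countable \<A>" for T \<A>
    using that by (rule catches_step[OF I hw K \<open>\<not> katetov_le K I\<close>])
  have "\<exists>\<A>\<subseteq>K. almost_disjoint \<A> \<and> (\<forall>T. catches X I (decode_fun X T) \<A>)"
    by (rule transfinite_almost_disjoint_family[where P = "\<lambda>T. catches X I (decode_fun X T)",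
        OF \<open>wf lt\<close> total[rule_format] segments[rule_format] catches_mono step])
  then obtain \<A> where "\<A> \<subseteq> K" "almost_disjoint \<A>" and catches: "\<forall>T. catches X I (decode_fun X T) \<A>"
    by blast
  have "catches X I z \<A>" for z
  proof -
    obtain T where "\<forall>x\<in>X. decode_fun X T x = z x"
      using decode_fun_surj[OF ideal_countable[OF I]] by blast
    then show ?thesis by (rule catches_cong[OF _ catches[rule_format]])
  qed
  with \<open>\<A> \<subseteq> K\<close> \<open>almost_disjoint \<A>\<close> show ?thesis by blast
qed

theorem theorem9p3:
  fixes X :: "'a set" and Y :: "'b set"
    and I I' :: "'a set set" and J :: "'b set set"
  assumes "CH"
    and "is_ideal X I" and "is_ideal Y J" and "is_ideal X I'"
    and "I \<subseteq> I'" and "hereditary_weak_P X I'"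
    and "\<not> katetov_le J I'"
  shows "\<exists>\<A>. almost_disjoint_family \<A> \<and> FinBW X I (mrowka \<A>) \<and> \<not> FinBW Y J (mrowka \<A>)"
proof -
  note J = \<open>is_ideal Y J\<close> and I' = \<open>is_ideal X I'\<close> and hw = \<open>hereditary_weak_P X I'\<close>
  obtain g where g: "bij_betw g Y (UNIV :: nat set)"
    using to_nat_on_infinite[OF ideal_countable[OF J] ideal_infinite[OF J]] by blast
  define K where "K = image_ideal Y J g"
  have K: "is_ideal UNIV K" unfolding K_def using J g by (rule is_ideal_image_ideal)
  have not_le: "\<not> katetov_le K I'"
    unfolding K_def using katetov_le_image_ideal[OF I' J g] \<open>\<not> katetov_le J I'\<close> by blast
  obtain \<A>\<^sub>0 where "\<A>\<^sub>0 \<subseteq> K" "almost_disjoint \<A>\<^sub>0" and catches\<^sub>0: "\<forall>z. catches X I' z \<A>\<^sub>0"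
    using CH_catching_family[OF \<open>CH\<close> I' hw K not_le] by blast
  obtain \<A> where "\<A>\<^sub>0 \<subseteq> \<A>" "almost_disjoint \<A>" "\<A> \<subseteq> K"
    and meets: "\<forall>D. D \<notin> K \<longrightarrow> (\<exists>A\<in>\<A>. infinite (D \<inter> A))"
    using almost_disjoint_extend_meeting_positive_sets[OF I' K not_le \<open>almost_disjoint \<A>\<^sub>0\<close> \<open>\<A>\<^sub>0 \<subseteq> K\<close>]
    by blast
  have "pairwise (\<lambda>A B. finite (A \<inter> B)) \<A>"
    using \<open>almost_disjoint \<A>\<close> by (simp add: almost_disjoint_def)
  then have "FinBW X I (mrowka \<A>)"
    by (rule FinBW_mrowka[OF \<open>I \<subseteq> I'\<close> I' hw _ catches_mono[OF catches\<^sub>0[rule_format] \<open>\<A>\<^sub>0 \<subseteq> \<A>\<close>]])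
  moreover have "\<not> FinBW Y J (mrowka \<A>)"
    using not_FinBW_mrowka[OF J g \<open>\<A> \<subseteq> K\<close>[unfolded K_def] meets[rule_format, unfolded K_def]] .
  moreover have "infinite \<A>"
    using infinite_if_meets_positive_sets[OF K \<open>\<A> \<subseteq> K\<close> meets[rule_format]] .
  ultimately show ?thesis
    using \<open>almost_disjoint \<A>\<close> by (intro exI[of _ \<A>]) (simp add: almost_disjoint_family_iff)
qed

end
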